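(* Let $q\ge 4$ and $t\ge 1$ be integers and let $M$ be a matroid with $\epsilon(M)\ge \frac{q^{r(M)}-1}{q-1}$ and $r(M)\ge 3t$. If $M$ is not round, then either $M$ has a $U_{2,q^2+2}$-minor or there is a round restriction $N$ of $M$ such that $r(N)\ge t$ and $\epsilon(N)>\frac{q^{r(N)}-1}{q-1}$.
   Context: A matroid $M$ is round if $E(M)$ cannot be partitioned into two sets each of rank less than $r(M)$. A point is a rank-$1$ flat and $\epsilon(M)$ is the number of points of $M$. $U_{2,m}$ is the uniform matroid of rank $2$ on $m$ elements. *)

theory Defs
  imports Complex_Main
begin

definition matroid :: "'a set \<Rightarrow> ('a set \<Rightarrow> bool) \<Rightarrow> bool" where
  "matroid E indep \<longleftrightarrow>
     finite E \<and> indep {} \<and> (\<forall>I. indep I \<longrightarrow> I \<subseteq> E) \<and>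
     (\<forall>I J. indep J \<and> I \<subseteq> J \<longrightarrow> indep I) \<and>
     (\<forall>I J. indep I \<and> indep J \<and> card I < card J \<longrightarrow> (\<exists>e \<in> J - I. indep (insert e I)))"

definition rk :: "('a set \<Rightarrow> bool) \<Rightarrow> 'a set \<Rightarrow> nat" where
  "rk indep X = Max {card I | I. I \<subseteq> X \<and> indep I}"

definition cl :: "'a set \<Rightarrow> ('a set \<Rightarrow> bool) \<Rightarrow> 'a set \<Rightarrow> 'a set" where
  "cl E indep X = {e \<in> E. rk indep (insert e X) = rk indep X}"

definition flat :: "'a set \<Rightarrow> ('a set \<Rightarrow> bool) \<Rightarrow> 'a set \<Rightarrow> bool" where
  "flat E indep F \<longleftrightarrow> F \<subseteq> E \<and> cl E indep F = F"

definition eps :: "'a set \<Rightarrow> ('a set \<Rightarrow> bool) \<Rightarrow> nat" where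
  "eps E indep = card {F. flat E indep F \<and> rk indep F = 1}"

definition round :: "'a set \<Rightarrow> ('a set \<Rightarrow> bool) \<Rightarrow> bool" where
  "round E indep \<longleftrightarrow>
     \<not> (\<exists>X Y. X \<union> Y = E \<and> X \<inter> Y = {} \<and> rk indep X < rk indep E \<and> rk indep Y < rk indep E)"

text \<open>Restriction M|X has ground set X and independence predicate restr indep X.\<close>
definition restr :: "('a set \<Rightarrow> bool) \<Rightarrow> 'a set \<Rightarrow> 'a set \<Rightarrow> bool" where
  "restr indep X = (\<lambda>I. indep I \<and> I \<subseteq> X)"

text \<open>M has a U_{2,m}-minor: there are disjoint C, D \<subseteq> E (contract C, delete D) such that
  the minor M/C\D, whose ground set is E - C - D and whose independent sets are the
  I \<subseteq> E - C - D with r(I \<union> C) = |I| + r(C), is the uniform matroid of rank 2 on m elements.\<close>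
definition has_U2_minor :: "nat \<Rightarrow> 'a set \<Rightarrow> ('a set \<Rightarrow> bool) \<Rightarrow> bool" where
  "has_U2_minor m E indep \<longleftrightarrow>
     (\<exists>C D. C \<subseteq> E \<and> D \<subseteq> E \<and> C \<inter> D = {} \<and> card (E - C - D) = m \<and>
        (\<forall>I. I \<subseteq> E - C - D \<longrightarrow>
             (rk indep (I \<union> C) = card I + rk indep C \<longleftrightarrow> card I \<le> 2)))"

end

theory Submission
  imports Defs
begin

text \<open>Choose one element from each point of M, giving a simple set S with |S| = \<epsilon>(M).
  Since M is not round, E splits into two sets of smaller rank, one of which contains at least half
  of S; iterating until the set reached is round gives a round restriction N with
  |S \<inter> E(N)| \<ge> 2^(r(N) - r(M)) \<epsilon>(M). As q > 2, this count exceeds (q^r(N) - 1)/(q - 1), so N is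
  the required restriction if r(N) \<ge> t. Otherwise 3 r(N) + 2 \<le> r(M), and the same count exceeds
  q^(2 r(N)), contradicting Kung's bound for a matroid without a U(2, q^2 + 2)-minor.\<close>

text \<open>The q-analogue [n]_q, the number of points of PG(n - 1, q).\<close>
definition q_int :: "real \<Rightarrow> nat \<Rightarrow> real" where
  "q_int q n = (q ^ n - 1) / (q - 1)"

lemma q_int_add: "q_int q (m + n) = q ^ n * q_int q m + q_int q n"
proof -
  have "q ^ (m + n) - 1 = q ^ n * (q ^ m - 1) + (q ^ n - 1)"
    by (simp add: power_add algebra_simps)
  then show ?thesis
    unfolding q_int_def by (metis add_divide_distrib times_divide_eq_right)
qed

lemma q_int_nonneg: "q > 1 \<Longrightarrow> q_int q n \<ge> 0"
  unfolding q_int_def by simp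

lemma q_int_pos: "q > 1 \<Longrightarrow> n \<ge> 1 \<Longrightarrow> q_int q n > 0"
  unfolding q_int_def by simp

lemma pow_le_q_int:
  assumes "q > 1" "n \<ge> 1"
  shows "q ^ (n - 1) \<le> q_int q n"
proof -
  have "q_int q n = q ^ (n - 1) * q_int q 1 + q_int q (n - 1)"
    using q_int_add[of q 1 "n - 1"] assms(2) by simp
  then show ?thesis
    using q_int_nonneg[of q "n - 1"] assms(1) by (simp add: q_int_def)
qed

lemma q_int_lt_of_le_pow2_mul:
  assumes "q \<ge> 2" "d \<ge> 1" "q_int q (s + d) \<le> 2 ^ d * c"
  shows "q_int q s < c"
proof (rule ccontr)
  assume "\<not> q_int q s < c"
  then have "2 ^ d * c \<le> 2 ^ d * q_int q s" by simp
  also have "\<dots> \<le> q ^ d * q_int q s"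
    using power_mono[of 2 q d] q_int_nonneg[of q s] assms(1) by (simp add: mult_right_mono)
  also have "\<dots> < q_int q (s + d)"
    using q_int_add[of q s d] q_int_pos[of q d] assms(1,2) by simp
  finally show False using assms(3) by simp
qed

lemma pow2_mul_pow_le_pow:
  fixes q :: real
  assumes "q \<ge> 4" "3 * s + 2 \<le> R"
  shows "2 ^ (R - s) * q ^ (2 * s) \<le> q ^ (R - 1)"
proof -
  define m where "m = R - 1 - 2 * s"
  have "(2::real) ^ (R - s) \<le> 2 ^ (2 * m)"
    by (rule power_increasing) (use assms(2) in \<open>simp_all add: m_def\<close>)
  also have "\<dots> = 4 ^ m" by (simp add: power_mult)
  also have "\<dots> \<le> q ^ m" by (rule power_mono) (use assms(1) in simp_all)
  finally have "2 ^ (R - s) * q ^ (2 * s) \<le> q ^ m * q ^ (2 * s)"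
    using assms(1) by (simp add: mult_right_mono)
  also have "\<dots> = q ^ (R - 1)"
    using assms(2) by (simp add: m_def power_add[symmetric])
  finally show ?thesis .
qed

lemma pow2_mul_lt_q_int:
  fixes q c :: real
  assumes "q \<ge> 4" "3 * s + 2 \<le> R" "c < q ^ (2 * s)"
  shows "2 ^ (R - s) * c < q_int q R"
proof -
  have "2 ^ (R - s) * c < 2 ^ (R - s) * q ^ (2 * s)" using assms(3) by simp
  also have "\<dots> \<le> q ^ (R - 1)" using pow2_mul_pow_le_pow assms(1,2) .
  also have "\<dots> \<le> q_int q R" using pow_le_q_int assms(1,2) by simp
  finally show ?thesis .
qed

lemma card_le_mult_if_covered:
  assumes "finite K" "S \<subseteq> (\<Union>k \<in> K. A k)" "\<And>k. k \<in> K \<Longrightarrow> finite (A k) \<and> card (A k) \<le> l"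
  shows "card S \<le> l * card K"
proof -
  have "card S \<le> card (\<Union>k \<in> K. A k)"
    using assms by (intro card_mono) auto
  also have "\<dots> \<le> (\<Sum>k \<in> K. card (A k))"
    by (rule card_UN_le[OF assms(1)])
  also have "\<dots> \<le> l * card K"
    using sum_bounded_above[of K "\<lambda>k. card (A k)" l] assms(3) by (simp add: mult.commute)
  finally show ?thesis .
qed

text \<open>\<open>simple_over indep C S\<close>: S is a simple set (no loops, no parallel pairs) of the
  contraction M/C.\<close>
definition simple_over :: "('a set \<Rightarrow> bool) \<Rightarrow> 'a set \<Rightarrow> 'a set \<Rightarrow> bool" where
  "simple_over indep C S \<longleftrightarrow>
     (\<forall>e\<in>S. rk indep (insert e C) = Suc (rk indep C)) \<and>
     (\<forall>e\<in>S. \<forall>f\<in>S. e \<noteq> f \<longrightarrow> rk indep (C \<union> {e, f}) = rk indep C + 2)"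

lemma simple_over_subset: "simple_over indep C S \<Longrightarrow> T \<subseteq> S \<Longrightarrow> simple_over indep C T"
  unfolding simple_over_def by blast

lemma simple_over_disjoint: "simple_over indep C S \<Longrightarrow> S \<inter> C = {}"
proof (rule ccontr)
  assume "simple_over indep C S" "S \<inter> C \<noteq> {}"
  then obtain x where "x \<in> S" "insert x C = C" by blast
  then have "rk indep C = Suc (rk indep C)"
    using \<open>simple_over indep C S\<close> unfolding simple_over_def by metis
  then show False by simp
qed

lemma ex_maximal_simple_over:
  assumes "finite U"
  shows "\<exists>S \<subseteq> U. simple_over indep C S \<and> (\<forall>x \<in> U - S. \<not> simple_over indep C (insert x S))"
proof -
  define F where "F = {S. S \<subseteq> U \<and> simple_over indep C S}"
  have "finite F"
    unfolding F_def using assms by (rule finite_subset[rotated, OF finite_Pow_iff[THEN iffD2]]) blast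
  moreover have "{} \<in> F"
    by (simp add: F_def simple_over_def)
  ultimately obtain S where "S \<in> F" and max: "\<forall>T \<in> F. S \<subseteq> T \<longrightarrow> S = T"
    using finite_has_maximal[of F] by blast
  then have S: "S \<subseteq> U" "simple_over indep C S" by (simp_all add: F_def)
  have "\<not> simple_over indep C (insert x S)" if "x \<in> U - S" for x
    using max S(1) that unfolding F_def by blast
  then show ?thesis using S by blast
qed

lemma rk_restr: "Y \<subseteq> X \<Longrightarrow> rk (restr indep X) Y = rk indep Y"
proof -
  assume "Y \<subseteq> X"
  then have "{card I | I. I \<subseteq> Y \<and> restr indep X I} = {card I | I. I \<subseteq> Y \<and> indep I}"
    unfolding restr_def by blast
  then show ?thesis
    unfolding rk_def by simp
qed

lemma round_restr: "round X (restr indep X) \<longleftrightarrow> round X indep"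
proof -
  have "rk (restr indep X) A = rk indep A" if "A \<subseteq> X" for A
    using that by (rule rk_restr)
  moreover have "A \<subseteq> X" "B \<subseteq> X" if "A \<union> B = X" for A B :: "'a set"
    using that by blast+
  ultimately have "(A \<union> B = X \<and> A \<inter> B = {} \<and>
      rk (restr indep X) A < rk (restr indep X) X \<and> rk (restr indep X) B < rk (restr indep X) X) \<longleftrightarrow>
    (A \<union> B = X \<and> A \<inter> B = {} \<and> rk indep A < rk indep X \<and> rk indep B < rk indep X)" for A B
    by (metis order_refl)
  then show ?thesis
    unfolding round_def by simp
qed

lemma simple_over_restr:
  assumes "C \<union> S \<subseteq> X"
  shows "simple_over (restr indep X) C S \<longleftrightarrow> simple_over indep C S"
proof -
  have "rk (restr indep X) C = rk indep C"
    using assms by (intro rk_restr) blast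
  moreover have "rk (restr indep X) (insert e C) = rk indep (insert e C)" if "e \<in> S" for e
    using assms that by (intro rk_restr) blast
  moreover have "rk (restr indep X) (C \<union> {e, f}) = rk indep (C \<union> {e, f})" if "e \<in> S" "f \<in> S" for e f
    using assms that by (intro rk_restr) blast
  ultimately show ?thesis
    unfolding simple_over_def by auto
qed

locale finite_matroid =
  fixes E :: "'a set" and indep :: "'a set \<Rightarrow> bool"
  assumes matroid: "matroid E indep"
begin

abbreviation r where "r \<equiv> rk indep"

lemma finite_E: "finite E"
  using matroid by (simp add: matroid_def)

lemma indep_empty: "indep {}"
  using matroid by (simp add: matroid_def)

lemma indep_subset_E: "indep I \<Longrightarrow> I \<subseteq> E"
  using matroid by (simp add: matroid_def)

lemma indep_subset: "indep J \<Longrightarrow> I \<subseteq> J \<Longrightarrow> indep I"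
  using matroid unfolding matroid_def by blast

lemma indep_augment: "indep I \<Longrightarrow> indep J \<Longrightarrow> card I < card J \<Longrightarrow> \<exists>e \<in> J - I. indep (insert e I)"
  using matroid unfolding matroid_def by blast

lemma finite_subset_E: "X \<subseteq> E \<Longrightarrow> finite X"
  by (rule finite_subset[OF _ finite_E])

lemma indep_finite: "indep I \<Longrightarrow> finite I"
  by (rule finite_subset_E[OF indep_subset_E])

lemma finite_indep_cards: "finite {card I | I. I \<subseteq> X \<and> indep I}"
proof -
  have "{card I | I. I \<subseteq> X \<and> indep I} \<subseteq> card ` Pow E"
    using indep_subset_E by blast
  then show ?thesis
    by (rule finite_subset) (simp add: finite_E)
qed

lemma rk_witness: "\<exists>I. I \<subseteq> X \<and> indep I \<and> card I = r X"
proof -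
  have "{card I | I. I \<subseteq> X \<and> indep I} \<noteq> {}"
    using indep_empty by blast
  then have "r X \<in> {card I | I. I \<subseteq> X \<and> indep I}"
    unfolding rk_def using Max_in[OF finite_indep_cards] by simp
  then obtain I where "r X = card I" "I \<subseteq> X" "indep I"
    unfolding mem_Collect_eq by (elim exE conjE)
  then show ?thesis by auto
qed

lemma card_le_rk: "I \<subseteq> X \<Longrightarrow> indep I \<Longrightarrow> card I \<le> r X"
  unfolding rk_def by (rule Max_ge[OF finite_indep_cards]) blast

lemma rk_mono:
  assumes "X \<subseteq> Y"
  shows "r X \<le> r Y"
proof -
  obtain I where "I \<subseteq> X" "indep I" "card I = r X"
    using rk_witness by blast
  then show ?thesis
    using card_le_rk[of I Y] assms by simp
qed

lemma rk_le_card: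
  assumes "finite X"
  shows "r X \<le> card X"
proof -
  obtain I where "I \<subseteq> X" "card I = r X"
    using rk_witness by blast
  then show ?thesis
    using card_mono[OF assms \<open>I \<subseteq> X\<close>] by simp
qed

lemma rk_indep: "indep I \<Longrightarrow> r I = card I"
  using rk_le_card[OF indep_finite] card_le_rk[of I I] by (simp add: le_antisym)

lemma rk_empty: "r {} = 0"
  using rk_le_card[of "{}"] by simp

lemma rk_insert_le: "r (insert e X) \<le> Suc (r X)"
proof -
  obtain I where I: "I \<subseteq> insert e X" "indep I" "card I = r (insert e X)"
    using rk_witness by blast
  have "card (I - {e}) \<le> r X"
    using I indep_subset card_le_rk[of "I - {e}" X] by blast
  moreover have "card I \<le> Suc (card (I - {e}))"
    using card_Suc_Diff1[OF indep_finite[OF I(2)], of e] by (cases "e \<in> I") simp_all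
  ultimately show ?thesis using I by simp
qed

lemma indep_extend_to_rk:
  assumes "indep I" "I \<subseteq> X"
  shows "\<exists>J. I \<subseteq> J \<and> J \<subseteq> X \<and> indep J \<and> card J = r X"
  using assms
proof (induction "r X - card I" arbitrary: I rule: less_induct)
  case less
  show ?case
  proof (cases "card I < r X")
    case False
    then show ?thesis using less.prems card_le_rk[of I X] by auto
  next
    case True
    obtain K where K: "K \<subseteq> X" "indep K" "card K = r X"
      using rk_witness by blast
    then obtain e where e: "e \<in> K - I" "indep (insert e I)"
      using indep_augment[OF less.prems(1) K(2)] True by auto
    have "card (insert e I) = Suc (card I)"
      using e indep_finite[OF less.prems(1)] by simp
    then have "r X - card (insert e I) < r X - card I" using True by simp
    then obtain J where "insert e I \<subseteq> J \<and> J \<subseteq> X \<and> indep J \<and> card J = r X"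
      using less.hyps[of "insert e I"] e K less.prems(2) by blast
    then show ?thesis by blast
  qed
qed

lemma rk_submod: "r (X \<union> Y) + r (X \<inter> Y) \<le> r X + r Y"
proof -
  obtain I where I: "I \<subseteq> X \<inter> Y" "indep I" "card I = r (X \<inter> Y)"
    using rk_witness by blast
  then obtain J where J: "I \<subseteq> J" "J \<subseteq> X \<union> Y" "indep J" "card J = r (X \<union> Y)"
    using indep_extend_to_rk[of I "X \<union> Y"] by blast
  have fin: "finite (J \<inter> X)" "finite (J \<inter> Y)"
    using indep_finite[OF J(3)] by auto
  have "card (J \<inter> X) \<le> r X" "card (J \<inter> Y) \<le> r Y"
    using card_le_rk indep_subset[OF J(3)] by auto
  moreover have "card J + card I \<le> card (J \<inter> X) + card (J \<inter> Y)"
  proof -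
    have "(J \<inter> X) \<union> (J \<inter> Y) = J" using J(2) by blast
    moreover have "card I \<le> card ((J \<inter> X) \<inter> (J \<inter> Y))"
      using I(1) J(1) fin by (intro card_mono) auto
    ultimately show ?thesis using card_Un_Int[OF fin] by simp
  qed
  ultimately show ?thesis using I(3) J(4) by simp
qed

lemma rk_Un_eq_if_insert_eq:
  assumes "finite T" "\<forall>x\<in>T. r (insert x B) = r B"
  shows "r (B \<union> T) = r B"
  using assms
proof (induction T rule: finite_induct)
  case empty
  then show ?case by simp
next
  case (insert x T)
  have union: "(B \<union> T) \<union> insert x B = B \<union> insert x T" by blast
  have "r B \<le> r ((B \<union> T) \<inter> insert x B)" by (rule rk_mono) blast
  then have "r (B \<union> insert x T) + r B \<le> r (B \<union> T) + r (insert x B)"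
    using rk_submod[of "B \<union> T" "insert x B"] unfolding union by linarith
  moreover have "r (B \<union> T) = r B" "r (insert x B) = r B"
    using insert.IH insert.prems by simp_all
  moreover have "r B \<le> r (B \<union> insert x T)" by (rule rk_mono) blast
  ultimately show ?case by linarith
qed

lemma has_U2_minor_if_simple_over_line:
  assumes "C \<subseteq> E" "T \<subseteq> E" "simple_over indep C T" "r (C \<union> T) \<le> r C + 2"
  shows "has_U2_minor (card T) E indep"
proof -
  have "r (I \<union> C) = card I + r C \<longleftrightarrow> card I \<le> 2" if "I \<subseteq> T" for I
  proof -
    have "finite I"
      using that assms(2) by (intro finite_subset_E) (rule order_trans)
    have "I \<union> C \<subseteq> C \<union> T" using that by blast
    then have bound: "r (I \<union> C) \<le> r C + 2"
      using rk_mono assms(4) le_trans by blast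
    consider "card I = 0" | "card I = 1" | "card I = 2" | "card I \<ge> 3"
      by linarith
    then show ?thesis
    proof cases
      case 1
      then show ?thesis using \<open>finite I\<close> by simp
    next
      case 2
      then obtain x where "I = {x}" by (auto simp: card_1_singleton_iff)
      then show ?thesis using 2 assms(3) that unfolding simple_over_def by auto
    next
      case 3
      then obtain x y where "I = {x, y}" "x \<noteq> y" by (auto simp: card_2_iff)
      moreover from this have "I \<union> C = C \<union> {x, y}" by blast
      ultimately show ?thesis using 3 assms(3) that unfolding simple_over_def by auto
    qed (use bound in simp)
  qed
  moreover have "E - C - (E - C - T) = T"
    using assms(2) simple_over_disjoint[OF assms(3)] by blast
  moreover have "C \<subseteq> E" "E - C - T \<subseteq> E" "C \<inter> (E - C - T) = {}"
    using assms(1) by blast+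
  ultimately show ?thesis
    unfolding has_U2_minor_def by (intro exI[of _ C] exI[of _ "E - C - T"]) simp
qed

lemma simple_over_contract_nonloop:
  assumes "simple_over indep C S" "p \<in> S" "x \<in> S - {p}"
  shows "r (insert x (insert p C)) = Suc (r (insert p C))"
proof -
  have "insert x (insert p C) = C \<union> {p, x}"
    by blast
  then show ?thesis
    using assms unfolding simple_over_def by auto
qed

lemma maximal_simple_over_covers:
  assumes "S \<subseteq> U" "simple_over indep A S"
    and "\<forall>x \<in> U. r (insert x A) = Suc (r A)"
    and "\<forall>x \<in> U - S. \<not> simple_over indep A (insert x S)"
    and "x \<in> U"
  shows "\<exists>k \<in> S. r (insert x (insert k A)) = r (insert k A)"
proof (cases "x \<in> S")
  case True
  then show ?thesis by (intro bexI[of _ x]) simp_all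
next
  case False
  have "\<forall>e \<in> insert x S. r (insert e A) = Suc (r A)"
    using assms(1,3,5) by blast
  then have "\<not> (\<forall>e \<in> insert x S. \<forall>f \<in> insert x S. e \<noteq> f \<longrightarrow> r (A \<union> {e, f}) = r A + 2)"
    using assms(4,5) False unfolding simple_over_def by blast
  then obtain y z where yz: "y \<in> insert x S" "z \<in> insert x S" "y \<noteq> z" "r (A \<union> {y, z}) \<noteq> r A + 2"
    by blast
  have "\<not> (y \<in> S \<and> z \<in> S)"
    using assms(2) yz(3,4) unfolding simple_over_def by blast
  then consider "y = x" "z \<in> S" | "z = x" "y \<in> S"
    using yz(1-3) by blast
  then obtain k where k: "k \<in> S" "r (insert x (insert k A)) \<noteq> r A + 2"
  proof cases
    case 1
    then have "A \<union> {y, z} = insert x (insert z A)" by blast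
    then show ?thesis using that 1 yz(4) by simp
  next
    case 2
    then have "A \<union> {y, z} = insert x (insert y A)" by blast
    then show ?thesis using that 2 yz(4) by simp
  qed
  have "r (insert k A) = Suc (r A)"
    using assms(1,3) k(1) by blast
  moreover have "r (insert k A) \<le> r (insert x (insert k A))"
    by (rule rk_mono) blast
  ultimately show ?thesis
    using k rk_insert_le[of x "insert k A"] by (intro bexI[of _ k]) auto
qed

lemma has_U2_minor_if_collinear:
  assumes "C \<subseteq> E" "S \<subseteq> E" "simple_over indep C S" "p \<in> S" "k \<in> S" "k \<noteq> p"
    and "T \<subseteq> S" "\<forall>x \<in> T. r (insert x (insert k (insert p C))) = r (insert k (insert p C))"
  shows "has_U2_minor (card T) E indep"
proof -
  have "T \<subseteq> E"
    using assms(2,7) by (rule order_trans[rotated])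
  have "r (C \<union> T) \<le> r (insert k (insert p C) \<union> T)"
    by (rule rk_mono) blast
  also have "\<dots> = r (insert k (insert p C))"
    using rk_Un_eq_if_insert_eq[OF finite_subset_E[OF \<open>T \<subseteq> E\<close>] assms(8)] .
  also have "\<dots> = r C + 2"
  proof -
    have "insert k (insert p C) = C \<union> {p, k}" by blast
    then show ?thesis using assms(3-6) unfolding simple_over_def by auto
  qed
  finally show ?thesis
    using has_U2_minor_if_simple_over_line[OF assms(1) \<open>T \<subseteq> E\<close>] simple_over_subset[OF assms(3,7)]
    by blast
qed

lemma lines_through_point_cover:
  assumes "S \<subseteq> E" "simple_over indep C S" "p \<in> S"
  obtains S' where "S' \<subseteq> S - {p}" "simple_over indep (insert p C) S'"
    "S - {p} \<subseteq> (\<Union>k \<in> S'. {x \<in> S. r (insert x (insert k (insert p C))) = r (insert k (insert p C))})"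
proof -
  have nonloop: "\<forall>x \<in> S - {p}. r (insert x (insert p C)) = Suc (r (insert p C))"
    using simple_over_contract_nonloop[OF assms(2,3)] by blast
  obtain S' where S': "S' \<subseteq> S - {p}" "simple_over indep (insert p C) S'"
    and max: "\<forall>x \<in> (S - {p}) - S'. \<not> simple_over indep (insert p C) (insert x S')"
    using ex_maximal_simple_over[of "S - {p}" indep "insert p C"] finite_subset_E[OF assms(1)] by blast
  show ?thesis
    using that[OF S'] maximal_simple_over_covers[OF S' nonloop max] by blast
qed

text \<open>Kung's argument: a maximal simple set S' of M/(C + p) indexes lines of M/C through p
  that cover S; either one of them carries l + 2 points of S, giving a U(2, l + 2)-minor, or
  |S| \<le> 1 + l |S'|.\<close>
lemma card_simple_over_lt_pow_step:
  assumes "l \<ge> 2" "C \<subseteq> E" "S \<subseteq> E" "simple_over indep C S" "p \<in> S"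
    and IH: "\<And>S'. S' \<subseteq> S - {p} \<Longrightarrow> simple_over indep (insert p C) S' \<Longrightarrow>
               has_U2_minor (l + 2) E indep \<or> card S' < l ^ s"
  shows "has_U2_minor (l + 2) E indep \<or> card S < l ^ Suc s"
proof -
  define A where "A = insert p C"
  have fin: "finite S"
    using assms(3) by (rule finite_subset_E)
  obtain S' where S': "S' \<subseteq> S - {p}" "simple_over indep A S'"
    and lines: "S - {p} \<subseteq> (\<Union>k \<in> S'. {x \<in> S. r (insert x (insert k A)) = r (insert k A)})"
    using lines_through_point_cover[OF assms(3-5)] unfolding A_def by blast
  define N where "N k = {x \<in> S. r (insert x (insert k A)) = r (insert k A)}" for k
  have p_in_N: "p \<in> N k" for k
    using assms(5) by (simp add: N_def A_def insert_commute)
  have N_sub: "N k \<subseteq> S" for k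
    by (auto simp: N_def)
  have cover: "S - {p} \<subseteq> (\<Union>k \<in> S'. N k - {p})"
    using lines unfolding N_def by blast
  show ?thesis
  proof (cases "\<exists>k \<in> S'. card (N k) \<ge> l + 2")
    case True
    then obtain k where k: "k \<in> S'" "l + 2 \<le> card (N k)"
      by blast
    obtain T where T: "T \<subseteq> N k" "card T = l + 2" "finite T"
      by (rule obtain_subset_with_card_n[OF k(2)])
    have "k \<in> S" "k \<noteq> p"
      using k(1) S'(1) by auto
    then have "has_U2_minor (card T) E indep"
      using has_U2_minor_if_collinear[OF assms(2-5), of k T] T(1) N_sub[of k]
      unfolding N_def A_def by blast
    then show ?thesis using T(2) by simp
  next
    case False
    have "finite S'"
      using S'(1) fin by (meson finite_Diff finite_subset)
    moreover have "finite (N k - {p}) \<and> card (N k - {p}) \<le> l" if "k \<in> S'" for k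
    proof -
      have "card (N k) < l + 2" using False that by auto
      then show ?thesis
        using card_Diff_singleton[OF p_in_N[of k]] finite_subset[OF N_sub fin] by simp
    qed
    ultimately have "card (S - {p}) \<le> l * card S'"
      using card_le_mult_if_covered[OF _ cover] by blast
    then have "card S \<le> Suc (l * card S')"
      using card_Suc_Diff1[OF fin assms(5)] by simp
    moreover have "Suc (l * card S') < l ^ Suc s" if "card S' < l ^ s"
    proof -
      have "l * (card S' + 1) \<le> l * l ^ s"
        using that by (intro mult_le_mono2) simp
      then show ?thesis using assms(1) by simp
    qed
    ultimately show ?thesis
      using IH[OF S'(1) S'(2)[unfolded A_def]] by fastforce
  qed
qed

lemma card_simple_over_lt_pow:
  assumes "l \<ge> 2"
  shows "C \<subseteq> E \<Longrightarrow> S \<subseteq> E \<Longrightarrow> simple_over indep C S \<Longrightarrow> r (C \<union> S) \<le> r C + s \<Longrightarrow>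
         has_U2_minor (l + 2) E indep \<or> card S < l ^ s"
proof (induction s arbitrary: C S)
  case 0
  have "S = {}"
  proof (rule ccontr)
    assume "S \<noteq> {}"
    then obtain p where "p \<in> S" by blast
    then have "Suc (r C) \<le> r (C \<union> S)"
      using "0.prems"(3) rk_mono[of "insert p C" "C \<union> S"] unfolding simple_over_def by auto
    then show False using "0.prems"(4) by simp
  qed
  then show ?case by simp
next
  case (Suc s)
  show ?case
  proof (cases "S = {}")
    case True
    then show ?thesis using assms by simp
  next
    case False
    then obtain p where p: "p \<in> S" by blast
    have rp: "r (insert p C) = Suc (r C)"
      using Suc.prems(3) p unfolding simple_over_def by blast
    show ?thesis
    proof (rule card_simple_over_lt_pow_step[OF assms Suc.prems(1-3) p])
      fix S' assume S': "S' \<subseteq> S - {p}" "simple_over indep (insert p C) S'"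
      have "r (insert p C \<union> S') \<le> r (C \<union> S)"
        using S'(1) p by (intro rk_mono) blast
      then have "r (insert p C \<union> S') \<le> r (insert p C) + s"
        using Suc.prems(4) rp by simp
      then show "has_U2_minor (l + 2) E indep \<or> card S' < l ^ s"
        using Suc.IH[of "insert p C" S'] Suc.prems(1,2) S' p by blast
    qed
  qed
qed

lemma not_round_split_half:
  assumes "X \<subseteq> E" "S \<subseteq> X" "\<not> round X indep"
  shows "\<exists>Z \<subseteq> X. r Z < r X \<and> card S \<le> 2 * card (S \<inter> Z)"
proof -
  obtain A B where AB: "A \<union> B = X" "A \<inter> B = {}" "r A < r X" "r B < r X"
    using assms(3) unfolding round_def by blast
  have "finite S"
    using assms(1,2) by (intro finite_subset_E) (rule order_trans)
  have "card ((S \<inter> A) \<union> (S \<inter> B)) = card (S \<inter> A) + card (S \<inter> B)"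
    by (rule card_Un_disjoint) (use \<open>finite S\<close> AB(2) in auto)
  moreover have "(S \<inter> A) \<union> (S \<inter> B) = S"
    using AB(1) assms(2) by blast
  ultimately have "card S = card (S \<inter> A) + card (S \<inter> B)"
    by simp
  then consider "card S \<le> 2 * card (S \<inter> A)" | "card S \<le> 2 * card (S \<inter> B)"
    by linarith
  moreover have "A \<subseteq> X" "B \<subseteq> X"
    using AB(1) by blast+
  ultimately show ?thesis
    using AB(3,4) by cases blast+
qed

lemma not_round_descent:
  assumes "X \<subseteq> E" "S \<subseteq> X" "\<not> round X indep"
  shows "\<exists>X' \<subseteq> X. round X' indep \<and> r X' < r X \<and> card S \<le> 2 ^ (r X - r X') * card (S \<inter> X')"
  using assms
proof (induction "r X" arbitrary: X S rule: less_induct)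
  case less
  obtain Z where Z: "Z \<subseteq> X" "r Z < r X" "card S \<le> 2 * card (S \<inter> Z)"
    using not_round_split_half[OF less.prems] by blast
  show ?case
  proof (cases "round Z indep")
    case True
    have "(2::nat) \<le> 2 ^ (r X - r Z)"
      using Z(2) by (simp add: self_le_power)
    then have "2 * card (S \<inter> Z) \<le> 2 ^ (r X - r Z) * card (S \<inter> Z)"
      by (rule mult_le_mono1)
    then have "card S \<le> 2 ^ (r X - r Z) * card (S \<inter> Z)"
      using Z(3) by linarith
    then show ?thesis
      using True Z(1,2) by blast
  next
    case False
    obtain X' where X': "X' \<subseteq> Z" "round X' indep" "r X' < r Z"
      "card (S \<inter> Z) \<le> 2 ^ (r Z - r X') * card (S \<inter> Z \<inter> X')"
      using less.hyps[OF Z(2) _ _ False, of "S \<inter> Z"] Z(1) less.prems(1) by blast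
    have "card S \<le> 2 * (2 ^ (r Z - r X') * card (S \<inter> Z \<inter> X'))"
      using Z(3) X'(4) by linarith
    also have "\<dots> \<le> 2 ^ (r X - r X') * card (S \<inter> X')"
    proof -
      have "S \<inter> Z \<inter> X' = S \<inter> X'"
        using X'(1) by blast
      moreover have "2 * 2 ^ (r Z - r X') \<le> (2::nat) ^ (r X - r X')"
        using X'(3) Z(2) power_increasing[of "Suc (r Z - r X')" "r X - r X'" "2::nat"] by simp
      ultimately show ?thesis
        by (metis mult.assoc mult_le_mono1)
    qed
    finally have "card S \<le> 2 ^ (r X - r X') * card (S \<inter> X')" .
    moreover have "X' \<subseteq> X" "r X' < r X"
      using X'(1,3) Z(1,2) by simp_all
    ultimately show ?thesis
      using X'(2) by blast
  qed
qed

lemma simple_over_empty_iff: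
  "simple_over indep {} S \<longleftrightarrow> (\<forall>e \<in> S. r {e} = 1) \<and> (\<forall>e \<in> S. \<forall>f \<in> S. e \<noteq> f \<longrightarrow> r {e, f} = 2)"
  unfolding simple_over_def using rk_empty by (simp add: numeral_2_eq_2)

definition point :: "'a \<Rightarrow> 'a set" where
  "point e = {x \<in> E. r {e, x} = 1}"

lemma rank1_flat_eq_point:
  assumes "flat E indep F" "r F = 1" "e \<in> F" "r {e} = 1"
  shows "F = point e"
proof
  have "F \<subseteq> E" using assms(1) unfolding flat_def by blast
  show "F \<subseteq> point e"
  proof
    fix x assume "x \<in> F"
    then have "r {e} \<le> r {e, x}" "r {e, x} \<le> r F"
      using assms(3) by (auto intro: rk_mono)
    then show "x \<in> point e"
      unfolding point_def using \<open>x \<in> F\<close> \<open>F \<subseteq> E\<close> assms(2,4) by auto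
  qed
  show "point e \<subseteq> F"
  proof
    fix x assume "x \<in> point e"
    then have "x \<in> E" "r {e, x} = 1" unfolding point_def by auto
    have "r (F \<union> {e, x}) + r (F \<inter> {e, x}) \<le> r F + r {e, x}"
      by (rule rk_submod)
    moreover have "r {e} \<le> r (F \<inter> {e, x})"
      using assms(3) by (intro rk_mono) blast
    moreover have "F \<union> {e, x} = insert x F"
      using assms(3) by blast
    moreover have "r F \<le> r (insert x F)"
      by (rule rk_mono) blast
    ultimately have "r (insert x F) = r F"
      using \<open>r {e, x} = 1\<close> assms(4) by simp
    then have "x \<in> cl E indep F"
      unfolding cl_def using \<open>x \<in> E\<close> by simp
    then show "x \<in> F"
      using assms(1) unfolding flat_def by simp
  qed
qed

lemma point_is_rank1_flat:
  assumes "e \<in> E" "r {e} = 1"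
  shows "e \<in> point e" "r (point e) = 1" "flat E indep (point e)"
proof -
  show e_in: "e \<in> point e"
    unfolding point_def using assms by simp
  have sub: "point e \<subseteq> E"
    unfolding point_def by blast
  have spanned: "r (insert x {e}) = r {e}" if "x \<in> point e" for x
    using that assms(2) unfolding point_def by (simp add: insert_commute)
  have "r ({e} \<union> point e) = r {e}"
    using rk_Un_eq_if_insert_eq[OF finite_subset[OF sub finite_E]] spanned by blast
  moreover have "r {e} \<le> r (point e)" "r (point e) \<le> r ({e} \<union> point e)"
    using e_in by (auto intro: rk_mono)
  ultimately show rk1: "r (point e) = 1"
    using assms(2) by simp
  have "cl E indep (point e) \<subseteq> point e"
  proof
    fix x assume "x \<in> cl E indep (point e)"
    then have "x \<in> E" "r (insert x (point e)) = 1"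
      unfolding cl_def using rk1 by auto
    moreover have "r {e} \<le> r {e, x}" "r {e, x} \<le> r (insert x (point e))"
      using e_in by (auto intro: rk_mono)
    ultimately show "x \<in> point e"
      unfolding point_def using assms(2) by simp
  qed
  moreover have "point e \<subseteq> cl E indep (point e)"
    unfolding cl_def using sub by (auto simp: insert_absorb)
  ultimately show "flat E indep (point e)"
    unfolding flat_def using sub by blast
qed

lemma card_simple_le_eps:
  assumes "S \<subseteq> E" "simple_over indep {} S"
  shows "card S \<le> eps E indep"
proof -
  define Pts where "Pts = {F. flat E indep F \<and> r F = 1}"
  have "Pts \<subseteq> Pow E"
    unfolding Pts_def flat_def by blast
  then have "finite Pts"
    by (rule finite_subset) (simp add: finite_E)
  have loopless: "r {e} = 1" if "e \<in> S" for e
    using assms(2) that unfolding simple_over_empty_iff by blast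
  have "point ` S \<subseteq> Pts"
    using point_is_rank1_flat(2,3) loopless assms(1) unfolding Pts_def by blast
  moreover have "inj_on point S"
  proof (rule inj_onI)
    fix e f assume "e \<in> S" "f \<in> S" "point e = point f"
    then have "f \<in> point e"
      using point_is_rank1_flat(1) loopless assms(1) by blast
    then have "r {e, f} = 1"
      unfolding point_def by simp
    moreover have "r {e, f} = 2" if "e \<noteq> f"
      using assms(2) \<open>e \<in> S\<close> \<open>f \<in> S\<close> that unfolding simple_over_empty_iff by blast
    ultimately show "e = f"
      by linarith
  qed
  ultimately show ?thesis
    unfolding eps_def Pts_def[symmetric]
    using card_inj_on_le[OF _ _ \<open>finite Pts\<close>] by blast
qed

lemma rk_pair_of_distinct_points:
  assumes "flat E indep F" "r F = 1" "e \<in> F" "r {e} = 1"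
    and "flat E indep G" "r G = 1" "f \<in> G" "r {f} = 1" "F \<noteq> G"
  shows "r {e, f} = 2"
proof -
  have F: "F = point e" and G: "G = point f"
    using rank1_flat_eq_point[OF assms(1-4)] rank1_flat_eq_point[OF assms(5-8)] .
  then have "e \<noteq> f"
    using assms(9) by auto
  then have "r {e, f} \<le> 2"
    using rk_le_card[of "{e, f}"] by simp
  moreover have "r {e} \<le> r {e, f}"
    by (rule rk_mono) blast
  moreover have "r {e, f} \<noteq> 1"
  proof
    assume "r {e, f} = 1"
    moreover have "f \<in> E"
      using assms(5,7) unfolding flat_def by blast
    ultimately have "f \<in> F"
      unfolding F point_def by simp
    then have "F = point f"
      using rank1_flat_eq_point[OF assms(1,2) _ assms(8)] by blast
    then show False
      using G assms(9) by simp
  qed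
  ultimately show ?thesis
    using assms(4) by linarith
qed

lemma ex_simple_card_eps: "\<exists>S \<subseteq> E. simple_over indep {} S \<and> card S = eps E indep"
proof -
  define Pts where "Pts = {F. flat E indep F \<and> r F = 1}"
  have loopless_member: "\<exists>e. e \<in> F \<and> r {e} = 1" if "F \<in> Pts" for F
  proof -
    have "r F = 1"
      using that by (simp add: Pts_def)
    then obtain I where I: "I \<subseteq> F" "indep I" "card I = 1"
      using rk_witness[of F] by metis
    then obtain e where "I = {e}"
      by (auto simp: card_1_singleton_iff)
    then show ?thesis
      using I rk_indep[OF I(2)] by auto
  qed
  define g where "g F = (SOME e. e \<in> F \<and> r {e} = 1)" for F
  have g: "g F \<in> F \<and> r {g F} = 1" if "F \<in> Pts" for F
    unfolding g_def using someI_ex[OF loopless_member[OF that]] .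
  have g_point: "F = point (g F)" if "F \<in> Pts" for F
    using rank1_flat_eq_point g[OF that] that unfolding Pts_def by blast
  have g_E: "g F \<in> E" if "F \<in> Pts" for F
    using g[OF that] that unfolding Pts_def flat_def by blast
  have "inj_on g Pts"
    using g_point by (intro inj_onI) metis
  moreover have "simple_over indep {} (g ` Pts)"
    unfolding simple_over_empty_iff
  proof (intro conjI ballI impI)
    fix e assume "e \<in> g ` Pts"
    then show "r {e} = 1" using g by blast
  next
    fix e f assume "e \<in> g ` Pts" "f \<in> g ` Pts" "e \<noteq> f"
    then obtain F G where "F \<in> Pts" "G \<in> Pts" "e = g F" "f = g G" "F \<noteq> G"
      by blast
    then show "r {e, f} = 2"
      using rk_pair_of_distinct_points[of F "g F" G "g G"] g[of F] g[of G] by (simp add: Pts_def)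
  qed
  ultimately show ?thesis
    using g_E card_image unfolding eps_def Pts_def[symmetric] by blast
qed

lemma matroid_restr:
  assumes "X \<subseteq> E"
  shows "matroid X (restr indep X)"
proof -
  have augment: "\<exists>e \<in> J - I. indep (insert e I) \<and> insert e I \<subseteq> X"
    if "indep I" "I \<subseteq> X" "indep J" "J \<subseteq> X" "card I < card J" for I J
    using indep_augment[OF that(1,3,5)] that(2,4) by blast
  show ?thesis
    unfolding matroid_def restr_def
    using finite_subset_E[OF assms] indep_empty augment by (auto intro: indep_subset)
qed

lemma card_simple_le_eps_restr:
  assumes "X \<subseteq> E" "S \<subseteq> X" "simple_over indep {} S"
  shows "card S \<le> eps X (restr indep X)"
proof -
  have "simple_over (restr indep X) {} S"
    using simple_over_restr[of "{}" S X indep] assms(2,3) by simp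
  then show ?thesis
    using finite_matroid.card_simple_le_eps[OF finite_matroid.intro[OF matroid_restr[OF assms(1)]] assms(2)]
    by blast
qed

lemma ex_round_with_many_points:
  assumes "\<not> round E indep"
  shows "\<exists>X \<subseteq> E. \<exists>S \<subseteq> X. round X indep \<and> r X < r E \<and> simple_over indep {} S \<and>
           eps E indep \<le> 2 ^ (r E - r X) * card S"
proof -
  obtain S where S: "S \<subseteq> E" "simple_over indep {} S" "card S = eps E indep"
    using ex_simple_card_eps by blast
  obtain X where X: "X \<subseteq> E" "round X indep" "r X < r E"
    "card S \<le> 2 ^ (r E - r X) * card (S \<inter> X)"
    using not_round_descent[OF subset_refl S(1) assms] by (elim exE conjE) (rule that; assumption)
  moreover have "simple_over indep {} (S \<inter> X)"
    using S(2) Int_lower1 by (rule simple_over_subset)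
  moreover have "S \<inter> X \<subseteq> X" "eps E indep \<le> 2 ^ (r E - r X) * card (S \<inter> X)"
    using X(4) S(3) by simp_all
  ultimately show ?thesis
    by blast
qed

lemma q_int_lt_eps_restr:
  assumes "q \<ge> 2" "X \<subseteq> E" "S \<subseteq> X" "simple_over indep {} S" "r X < R"
    and "q_int q R \<le> 2 ^ (R - r X) * real (card S)"
  shows "q_int q (rk (restr indep X) X) < eps X (restr indep X)"
proof -
  have "q_int q (r X) < card S"
    using q_int_lt_of_le_pow2_mul[of q "R - r X" "r X"] assms(1,5,6) by simp
  also have "\<dots> \<le> eps X (restr indep X)"
    using card_simple_le_eps_restr[OF assms(2-4)] by simp
  finally show ?thesis
    by (simp add: rk_restr)
qed

lemma has_U2_minor_if_low_rank:
  assumes "q \<ge> 4" "S \<subseteq> E" "simple_over indep {} S" "r S \<le> s" "3 * s + 2 \<le> R"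
    and "q_int q R \<le> 2 ^ (R - s) * real (card S)"
  shows "has_U2_minor (q\<^sup>2 + 2) E indep"
proof -
  have "\<not> card S < q ^ (2 * s)"
  proof
    assume "card S < q ^ (2 * s)"
    then have "real (card S) < real q ^ (2 * s)"
      by (simp only: of_nat_power[symmetric] of_nat_less_iff)
    then have "2 ^ (R - s) * real (card S) < q_int q R"
      using assms(1,5) by (intro pow2_mul_lt_q_int) simp_all
    then show False
      using assms(6) by linarith
  qed
  then show ?thesis
    using card_simple_over_lt_pow[of "q\<^sup>2" "{}" S s] assms(1-4) by (simp add: rk_empty power_mult)
qed

end

theorem lemma2p5:
  fixes q t :: nat and E :: "'a set" and indep :: "'a set \<Rightarrow> bool"
  assumes "matroid E indep"
    and "q \<ge> 4" and "t \<ge> 1"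
    and "real (eps E indep) \<ge> (real q ^ rk indep E - 1) / (real q - 1)"
    and "rk indep E \<ge> 3 * t"
    and "\<not> round E indep"
  shows "has_U2_minor (q^2 + 2) E indep \<or>
         (\<exists>X. X \<subseteq> E \<and> round X (restr indep X) \<and> rk (restr indep X) X \<ge> t \<and>
              real (eps X (restr indep X)) > (real q ^ rk (restr indep X) X - 1) / (real q - 1))"
proof -
  interpret finite_matroid E indep
    by (rule finite_matroid.intro) fact
  obtain X S where XS: "X \<subseteq> E" "S \<subseteq> X" "round X indep" "r X < r E" "simple_over indep {} S"
    "eps E indep \<le> 2 ^ (r E - r X) * card S"
    using ex_round_with_many_points[OF assms(6)] by blast
  have "real (eps E indep) \<le> real (2 ^ (r E - r X) * card S)"
    using XS(6) by (simp only: of_nat_le_iff)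
  then have many: "q_int q (r E) \<le> 2 ^ (r E - r X) * real (card S)"
    using assms(4) unfolding q_int_def by simp
  show ?thesis
  proof (cases "t \<le> r X")
    case True
    then show ?thesis
      using q_int_lt_eps_restr[of q X S "r E"] XS many assms(2)
      unfolding q_int_def by (auto simp: rk_restr round_restr)
  next
    case False
    then have "3 * r X + 2 \<le> r E"
      using assms(5) by linarith
    then show ?thesis
      using has_U2_minor_if_low_rank[of q S "r X" "r E"] XS(1,2,5) many assms(2) rk_mono[of S X]
      by auto
  qed
qed

end
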